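(* Let $G$ be a locally compact abelian group acting continuously on a compact metric space $(X,d)$. Then complete proximality $\sim_{cp}$ is an equivalence relation on $X$.
   Context: Let $\mathcal A$ be the collection of subsets $A\subset G$ which contain a translate of every compact subset of $G$. Points $x,y\in X$ are proximal in $A$ if $\inf_{t\in A}d(t\cdot x,t\cdot y)=0$, and completely proximal, $x\sim_{cp}y$, if they are proximal in every $A\in\mathcal A$. *)

theory Defs
  imports "HOL-Analysis.Analysis"
begin

definition continuous_action :: "('g::topological_ab_group_add \<Rightarrow> 'x::metric_space \<Rightarrow> 'x) \<Rightarrow> 'x set \<Rightarrow> bool" where
  "continuous_action act X \<longleftrightarrow>
     (\<forall>t x. x \<in> X \<longrightarrow> act t x \<in> X) \<and>
     (\<forall>x\<in>X. act 0 x = x) \<and>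
     (\<forall>s t x. x \<in> X \<longrightarrow> act (s + t) x = act s (act t x)) \<and>
     continuous_on (UNIV \<times> X) (\<lambda>(t, x). act t x)"

definition thick_sets :: "'g::topological_ab_group_add set set" where
  "thick_sets = {A. \<forall>K. compact K \<longrightarrow> (\<exists>g. (\<lambda>k. g + k) ` K \<subseteq> A)}"

definition proximal_in :: "('g \<Rightarrow> 'x::metric_space \<Rightarrow> 'x) \<Rightarrow> 'g set \<Rightarrow> 'x \<Rightarrow> 'x \<Rightarrow> bool" where
  "proximal_in act A x y \<longleftrightarrow> (INF t\<in>A. dist (act t x) (act t y)) = 0"

definition completely_proximal :: "('g::topological_ab_group_add \<Rightarrow> 'x::metric_space \<Rightarrow> 'x) \<Rightarrow> 'x \<Rightarrow> 'x \<Rightarrow> bool" where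
  "completely_proximal act x y \<longleftrightarrow> (\<forall>A\<in>thick_sets. proximal_in act A x y)"

end

theory Submission
  imports Defs
begin

text \<open>
  Transitivity rests
  on one key fact: if x and y are completely proximal and A is thick (contains a
  translate of every compact set), then so is the set of times in A at which x and y are
  e-close.  To see this, given a compact L, the acting maps indexed by L are uniformly
  equicontinuous on the compact space X, so it suffices to find s with s + L inside A
  at which x and y are very close; such s exist because the set of these s is again
  thick.  Applying proximality of y and z in that thick set and the triangle inequality
  yields proximality of x and z in A.  Commutativity of the group is what allows us to
  write the action of s + l as the action of l after that of s.
\<close>

lemma thick_sets_nonempty: "A \<in> thick_sets \<Longrightarrow> A \<noteq> {}"
  using compact_sing[of 0] unfolding thick_sets_def by blast

lemma proximal_in_iff:
  assumes "A \<noteq> {}"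
  shows "proximal_in act A x y \<longleftrightarrow> (\<forall>e>0. \<exists>t\<in>A. dist (act t x) (act t y) < e)"
proof -
  let ?D = "\<lambda>t. dist (act t x) (act t y)"
  have bdd: "bdd_below (?D ` A)"
    by (rule bdd_belowI[of _ 0]) auto
  have nonneg: "0 \<le> (INF t\<in>A. ?D t)"
    using assms by (intro cINF_greatest) auto
  have "(INF t\<in>A. ?D t) = 0 \<longleftrightarrow> (\<forall>e>0. (INF t\<in>A. ?D t) < e)"
    using nonneg by (metis dual_order.irrefl le_less)
  also have "\<dots> \<longleftrightarrow> (\<forall>e>0. \<exists>t\<in>A. ?D t < e)"
    using cINF_less_iff[OF assms bdd] by simp
  finally show ?thesis
    unfolding proximal_in_def .
qed

lemma completely_proximal_iff:
  "completely_proximal act x y \<longleftrightarrow>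
     (\<forall>A\<in>thick_sets. \<forall>e>0. \<exists>t\<in>A. dist (act t x) (act t y) < e)"
  unfolding completely_proximal_def by (simp add: proximal_in_iff thick_sets_nonempty)

lemma completely_proximal_refl: "completely_proximal act x x"
  by (auto simp: completely_proximal_iff dest: thick_sets_nonempty)

lemma completely_proximal_sym:
  "completely_proximal act x y \<Longrightarrow> completely_proximal act y x"
  by (simp add: completely_proximal_iff dist_commute)

text \<open>If A is thick and L compact, the set of s with s + L contained in A is thick:
  a translate of M + L inside A gives a translate of M inside that set.\<close>

lemma thick_sets_translates:
  fixes A :: "'g::topological_ab_group_add set"
  assumes A: "A \<in> thick_sets" and L: "compact L"
  shows "{s. (\<lambda>l. s + l) ` L \<subseteq> A} \<in> thick_sets"
  unfolding thick_sets_def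
proof clarify
  fix M :: "'g set"
  assume "compact M"
  then have "compact ((\<lambda>p. fst p + snd p) ` (M \<times> L))"
    by (intro compact_continuous_image compact_Times L continuous_intros)
  then obtain g where g: "(\<lambda>k. g + k) ` ((\<lambda>p. fst p + snd p) ` (M \<times> L)) \<subseteq> A"
    using A unfolding thick_sets_def by blast
  have "(\<lambda>l. (g + m) + l) ` L \<subseteq> A" if "m \<in> M" for m
    using g that by (force simp: add.assoc)
  then show "\<exists>g. (\<lambda>k. g + k) ` M \<subseteq> {s. (\<lambda>l. s + l) ` L \<subseteq> A}"
    by blast
qed

lemma action_uniformly_equicontinuous:
  fixes act :: "'g::topological_ab_group_add \<Rightarrow> 'x::metric_space \<Rightarrow> 'x"
  assumes act: "continuous_action act X" and X: "compact X" and L: "compact L"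
    and e: "0 < e"
  obtains d where "0 < d"
    "\<And>l u v. l \<in> L \<Longrightarrow> u \<in> X \<Longrightarrow> v \<in> X \<Longrightarrow> dist u v < d \<Longrightarrow> dist (act l u) (act l v) < e"
proof -
  have "continuous_on (UNIV \<times> X) (\<lambda>(t, x). act t x)"
    using act by (simp add: continuous_action_def)
  moreover have "continuous_on (X \<times> L) (\<lambda>p. (snd p, fst p))"
    by (intro continuous_intros)
  moreover have "(\<lambda>p. (snd p, fst p)) ` (X \<times> L) \<subseteq> UNIV \<times> X"
    by auto
  ultimately have "continuous_on (X \<times> L) ((\<lambda>(t, x). act t x) \<circ> (\<lambda>p. (snd p, fst p)))"
    by (meson continuous_on_compose continuous_on_subset)
  then have cont: "continuous_on (X \<times> L) (\<lambda>p. act (snd p) (fst p))"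
    by (simp add: o_def)
  text \<open>Pointwise equicontinuity, from the tube lemma for the compact factor L.\<close>
  have pointwise: "\<exists>d>0. \<forall>f\<in>act ` L. \<forall>x'\<in>X. dist x' x < d \<longrightarrow> dist (f x') (f x) < \<epsilon>"
    if x: "x \<in> X" and \<epsilon>: "0 < \<epsilon>" for x \<epsilon>
  proof -
    have "0 < \<epsilon>/2"
      using \<epsilon> by simp
    from continuous_on_prod_compactE[OF cont L x this]
    obtain U where U: "x \<in> U" "open U"
      "\<forall>x'\<in>U \<inter> X. \<forall>t\<in>L. dist (act t x') (act t x) \<le> \<epsilon>/2"
      by (metis fst_conv snd_conv)
    obtain d where "d > 0" "ball x d \<subseteq> U"
      using U open_contains_ball by blast
    then have "dist (act t x') (act t x) < \<epsilon>"
      if "t \<in> L" "x' \<in> X" "dist x' x < d" for t x'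
    proof -
      have "x' \<in> U"
        using \<open>ball x d \<subseteq> U\<close> that(3) by (auto simp: dist_commute)
      then have "dist (act t x') (act t x) \<le> \<epsilon>/2"
        using U(3) that(1,2) by blast
      then show ?thesis
        using \<epsilon> by linarith
    qed
    then show ?thesis
      using \<open>d > 0\<close> by blast
  qed
  obtain d where "0 < d"
    "\<And>f x x'. f \<in> act ` L \<Longrightarrow> x \<in> X \<Longrightarrow> x' \<in> X \<Longrightarrow> dist x' x < d \<Longrightarrow> dist (f x') (f x) < e"
    using compact_uniformly_equicontinuous[OF X pointwise e] by blast
  then show ?thesis
    using that by blast
qed

lemma completely_proximal_close_times_thick:
  fixes act :: "'g::topological_ab_group_add \<Rightarrow> 'x::metric_space \<Rightarrow> 'x"
  assumes act: "continuous_action act X" and X: "compact X"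
    and xy: "completely_proximal act x y" "x \<in> X" "y \<in> X"
    and A: "A \<in> thick_sets" and e: "0 < e"
  shows "{t\<in>A. dist (act t x) (act t y) < e} \<in> thick_sets"
  unfolding thick_sets_def
proof clarify
  fix L :: "'g set"
  assume L: "compact L"
  have inX: "\<And>t u. u \<in> X \<Longrightarrow> act t u \<in> X"
    and add: "\<And>s t u. u \<in> X \<Longrightarrow> act (s + t) u = act s (act t u)"
    using act by (auto simp: continuous_action_def)
  obtain d where d: "0 < d"
    "\<And>l u v. l \<in> L \<Longrightarrow> u \<in> X \<Longrightarrow> v \<in> X \<Longrightarrow> dist u v < d \<Longrightarrow> dist (act l u) (act l v) < e"
    using action_uniformly_equicontinuous[OF act X L e] by blast
  have "\<exists>s\<in>{s. (\<lambda>l. s + l) ` L \<subseteq> A}. dist (act s x) (act s y) < d"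
    using xy(1) thick_sets_translates[OF A L] d(1) unfolding completely_proximal_iff by blast
  then obtain s where s: "(\<lambda>l. s + l) ` L \<subseteq> A" "dist (act s x) (act s y) < d"
    by blast
  have "dist (act (s + l) x) (act (s + l) y) < e" if "l \<in> L" for l
    using d(2)[OF that inX inX s(2)] xy(2,3) add[of _ l s] by (simp add: add.commute)
  then have "(\<lambda>l. s + l) ` L \<subseteq> {t\<in>A. dist (act t x) (act t y) < e}"
    using s(1) by auto
  then show "\<exists>g. (\<lambda>k. g + k) ` L \<subseteq> {t\<in>A. dist (act t x) (act t y) < e}"
    by blast
qed

lemma completely_proximal_trans:
  fixes act :: "'g::topological_ab_group_add \<Rightarrow> 'x::metric_space \<Rightarrow> 'x"
  assumes act: "continuous_action act X" and X: "compact X"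
    and xy: "completely_proximal act x y" and yz: "completely_proximal act y z"
    and "x \<in> X" "y \<in> X"
  shows "completely_proximal act x z"
  unfolding completely_proximal_iff
proof (intro ballI allI impI)
  fix A :: "'g set" and e :: real
  assume A: "A \<in> thick_sets" and e: "0 < e"
  let ?B = "{t\<in>A. dist (act t x) (act t y) < e/2}"
  have "?B \<in> thick_sets"
    using completely_proximal_close_times_thick[OF act X xy \<open>x \<in> X\<close> \<open>y \<in> X\<close> A, of "e/2"] e
    by simp
  then obtain t where t: "t \<in> ?B" "dist (act t y) (act t z) < e/2"
    using yz e unfolding completely_proximal_iff by (meson half_gt_zero)
  have "dist (act t x) (act t z) \<le> dist (act t x) (act t y) + dist (act t y) (act t z)"
    by (rule dist_triangle)
  with t have "dist (act t x) (act t z) < e"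
    by simp
  with t(1) show "\<exists>t\<in>A. dist (act t x) (act t z) < e"
    by blast
qed

theorem mainTheorem17:
  fixes act :: "'g::{topological_ab_group_add, t2_space} \<Rightarrow> 'x::metric_space \<Rightarrow> 'x"
    and X :: "'x set"
  assumes "locally_compact_space (euclidean :: 'g topology)"
    and "compact X"
    and "continuous_action act X"
  shows "equiv X {(x, y). x \<in> X \<and> y \<in> X \<and> completely_proximal act x y}"
proof (rule equivI)
  show "refl_on X {(x, y). x \<in> X \<and> y \<in> X \<and> completely_proximal act x y}"
    by (auto simp: refl_on_def completely_proximal_refl)
  show "sym {(x, y). x \<in> X \<and> y \<in> X \<and> completely_proximal act x y}"
    by (auto simp: sym_def intro: completely_proximal_sym)
  show "trans {(x, y). x \<in> X \<and> y \<in> X \<and> completely_proximal act x y}"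
    using completely_proximal_trans[OF assms(3,2)] by (auto simp: trans_def)
qed auto

end
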